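(* For any instance of the multiple-processor multitask scheduling problem described in the context, for all $y\ge0$ and $t\ge0$, $$W^{\mathrm{M\text{-}SRPT}}_{\le y}(t)-W^{\mathrm{SRPT}_{1,N}}_{\le y}(t)\le N\cdot(2y+\eta).$$
   Context: Problem: $N$ identical unit-speed machines; jobs arrive online, job $i$ with release date $r_i$ and tasks of processing times $p_i^{(\ell)}>0$, workload $p_i=\sum_\ell p_i^{(\ell)}$; each task is preemptive or non-preemptive (a non-preemptive task once started runs uninterrupted to completion); each machine processes at most one task at a time; a job completes when all its tasks complete. $\eta$ is the maximum processing time of a non-preemptive task. M-SRPT: at every time, each machine running a started non-preemptive task continues it; all other machines are assigned to alive jobs in increasing order of remaining total workload; tasks within a job are processed in an arbitrary order. $\mathrm{SRPT}_{1,N}$: on the same arrival sequence, a single machine of speed $N$ processing each job as a single fully preemptible workload $p_i$ (tasks ignored) by the shortest-remaining-processing-time rule. For a schedule $\pi$, $W^\pi_{\le y}(t)$ is the total remaining workload at time $t$ of the alive jobs whose remaining workload is at most $y$. *)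

theory Defs
  imports "HOL-Analysis.Analysis"
begin

text \<open>Instance: N machines; jobs 0..<n; job i has release date r i and tasks 0..<k i;
  task (i,l) has processing time p i l and is non-preemptive iff np i l.\<close>

definition pconst :: "(real \<Rightarrow> 'a) \<Rightarrow> bool" where
  "pconst f \<longleftrightarrow>
     (\<forall>t. \<exists>e>0. \<forall>s. t \<le> s \<and> s < t + e \<longrightarrow> f s = f t) \<and>
     (\<forall>t. \<exists>e>0. \<forall>s. t - e < s \<and> s < t \<longrightarrow> f s = f (t - e / 2))"

text \<open>Multi-machine schedule: sigma t m = Some (i,l) means machine m processes task l of job i
  at time t (on [t, t+dt)); None means idle.\<close>
definition mproc :: "nat \<Rightarrow> (real \<Rightarrow> nat \<Rightarrow> (nat \<times> nat) option) \<Rightarrow> nat \<Rightarrow> nat \<Rightarrow> real \<Rightarrow> real" where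
  "mproc N \<sigma> i l t = (\<Sum>m<N. measure lborel {s \<in> {0..<t}. \<sigma> s m = Some (i, l)})"

definition mrem :: "nat \<Rightarrow> (nat \<Rightarrow> nat \<Rightarrow> real) \<Rightarrow> (real \<Rightarrow> nat \<Rightarrow> (nat \<times> nat) option)
    \<Rightarrow> nat \<Rightarrow> nat \<Rightarrow> real \<Rightarrow> real" where
  "mrem N p \<sigma> i l t = p i l - mproc N \<sigma> i l t"

definition mjrem :: "nat \<Rightarrow> (nat \<Rightarrow> nat) \<Rightarrow> (nat \<Rightarrow> nat \<Rightarrow> real) \<Rightarrow> (real \<Rightarrow> nat \<Rightarrow> (nat \<times> nat) option)
    \<Rightarrow> nat \<Rightarrow> real \<Rightarrow> real" where
  "mjrem N k p \<sigma> i t = (\<Sum>l<k i. mrem N p \<sigma> i l t)"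

definition msrpt_schedule :: "nat \<Rightarrow> nat \<Rightarrow> (nat \<Rightarrow> real) \<Rightarrow> (nat \<Rightarrow> nat) \<Rightarrow> (nat \<Rightarrow> nat \<Rightarrow> real)
    \<Rightarrow> (nat \<Rightarrow> nat \<Rightarrow> bool) \<Rightarrow> (real \<Rightarrow> nat \<Rightarrow> (nat \<times> nat) option) \<Rightarrow> bool" where
  "msrpt_schedule N n r k p np \<sigma> \<longleftrightarrow>
     pconst \<sigma> \<and>
     \<comment> \<open>only released, unfinished, existing tasks are processed\<close>
     (\<forall>t\<ge>0. \<forall>m<N. \<forall>i l. \<sigma> t m = Some (i, l) \<longrightarrow>
         i < n \<and> l < k i \<and> r i \<le> t \<and> mrem N p \<sigma> i l t > 0) \<and>
     \<comment> \<open>a task is processed by at most one machine at a time\<close>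
     (\<forall>t\<ge>0. \<forall>m<N. \<forall>m'<N. m \<noteq> m' \<and> \<sigma> t m \<noteq> None \<longrightarrow> \<sigma> t m' \<noteq> \<sigma> t m) \<and>
     \<comment> \<open>a started non-preemptive task continues on its machine until completion\<close>
     (\<forall>s t m i l. 0 \<le> s \<and> s \<le> t \<and> m < N \<and> np i l \<and> \<sigma> s m = Some (i, l)
         \<and> mrem N p \<sigma> i l t > 0 \<longrightarrow> \<sigma> t m = Some (i, l)) \<and>
     \<comment> \<open>priority rule: if an alive job j has an unfinished task that is not running and may be
        started/resumed, then every machine is busy, either with a started non-preemptive task
        or with a task of a job whose remaining workload is at most that of j\<close>
     (\<forall>t\<ge>0. \<forall>j<n. \<forall>l<k j.
         r j \<le> t \<and> mrem N p \<sigma> j l t > 0 \<and> (\<forall>m<N. \<sigma> t m \<noteq> Some (j, l))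
         \<and> (\<not> np j l \<or> mproc N \<sigma> j l t = 0) \<longrightarrow>
         (\<forall>m<N. \<exists>i' l'. \<sigma> t m = Some (i', l') \<and>
             ((np i' l' \<and> mproc N \<sigma> i' l' t > 0) \<or> mjrem N k p \<sigma> i' t \<le> mjrem N k p \<sigma> j t)))"

text \<open>Single machine of speed N: tau t = Some i means job i is processed at time t.\<close>
definition sproc :: "nat \<Rightarrow> (real \<Rightarrow> nat option) \<Rightarrow> nat \<Rightarrow> real \<Rightarrow> real" where
  "sproc N \<tau> i t = real N * measure lborel {s \<in> {0..<t}. \<tau> s = Some i}"

definition srem :: "nat \<Rightarrow> (nat \<Rightarrow> nat) \<Rightarrow> (nat \<Rightarrow> nat \<Rightarrow> real) \<Rightarrow> (real \<Rightarrow> nat option)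
    \<Rightarrow> nat \<Rightarrow> real \<Rightarrow> real" where
  "srem N k p \<tau> i t = (\<Sum>l<k i. p i l) - sproc N \<tau> i t"

definition srpt1N_schedule :: "nat \<Rightarrow> nat \<Rightarrow> (nat \<Rightarrow> real) \<Rightarrow> (nat \<Rightarrow> nat) \<Rightarrow> (nat \<Rightarrow> nat \<Rightarrow> real)
    \<Rightarrow> (real \<Rightarrow> nat option) \<Rightarrow> bool" where
  "srpt1N_schedule N n r k p \<tau> \<longleftrightarrow>
     pconst \<tau> \<and>
     (\<forall>t\<ge>0. \<forall>i. \<tau> t = Some i \<longrightarrow> i < n \<and> r i \<le> t \<and> srem N k p \<tau> i t > 0) \<and>
     (\<forall>t\<ge>0. \<forall>j<n. r j \<le> t \<and> srem N k p \<tau> j t > 0 \<longrightarrow>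
         (\<exists>i. \<tau> t = Some i \<and> srem N k p \<tau> i t \<le> srem N k p \<tau> j t))"

definition Wle :: "nat \<Rightarrow> (nat \<Rightarrow> real) \<Rightarrow> (nat \<Rightarrow> real \<Rightarrow> real) \<Rightarrow> real \<Rightarrow> real \<Rightarrow> real" where
  "Wle n r R y t = (\<Sum>i\<in>{i. i < n \<and> r i \<le> t \<and> 0 < R i t \<and> R i t \<le> y}. R i t)"

definition eta :: "nat \<Rightarrow> (nat \<Rightarrow> nat) \<Rightarrow> (nat \<Rightarrow> nat \<Rightarrow> real) \<Rightarrow> (nat \<Rightarrow> nat \<Rightarrow> bool) \<Rightarrow> real" where
  "eta n k p np = Max ({0} \<union> {p i l | i l. i < n \<and> l < k i \<and> np i l})"

end

theory Submission
  imports Defs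
begin

text \<open>
  Let \<open>W\<^sup>M\<^sub>i\<close> and \<open>W\<^sup>S\<^sub>i\<close> be the contributions of job \<open>i\<close> to \<open>W\<^sub>\<le>\<^sub>y\<close> under M-SRPT and under
  the fast single machine (\<open>Wjob\<close>). We bound the potential (\<open>potential\<close>)
  \<open>\<Psi> = \<Sum>\<^sub>i (W\<^sup>M\<^sub>i + \<kappa>\<^sub>i - W\<^sup>S\<^sub>i) + \<Sum>\<^sub>m \<rho>\<^sub>m\<close>
  by \<open>N (y + \<eta>)\<close>, where \<open>\<rho>\<^sub>m\<close> (\<open>np_backlog\<close>) is the remaining time of the task on machine \<open>m\<close>
  if it is a started non-preemptive task of a big job (remaining workload \<open>> y\<close>), and \<open>\<kappa>\<^sub>i = y\<close>
  if job \<open>i\<close> is big, has a running task, and its idle tasks have total remaining time at most \<open>y\<close>;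
  \<open>\<kappa>\<^sub>i\<close> pays in advance for the upward jump of \<open>W\<^sup>M\<^sub>i\<close> when a big job becomes small.
  As \<open>\<kappa>, \<rho> \<ge> 0\<close>, this even bounds the difference of the two workloads by \<open>N (y + \<eta>)\<close>.

  If no small job has a task that could be started, every job contributing to \<open>\<Psi>\<close> is running,
  so at most \<open>N\<close> jobs contribute at most \<open>y\<close> each, and each \<open>\<rho>\<^sub>m \<le> \<eta>\<close>. Otherwise every
  machine serves a small job or a started non-preemptive task of a big job, so \<open>\<Sum> W\<^sup>M + \<Sum> \<rho>\<close>
  decreases at rate \<open>N\<close> while \<open>\<Sum> W\<^sup>S\<close> decreases at rate at most \<open>N\<close> and arrivals add the same
  amount to both; hence \<open>\<Psi>\<close> does not increase, and the bound propagates by continuous induction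
  over time.
\<close>

subsection \<open>Continuous induction and piecewise constant functions\<close>

lemma continuous_induct [consumes 1, case_names left right]:
  fixes P :: "real \<Rightarrow> bool"
  assumes "a \<le> t"
    and left: "\<And>s. a \<le> s \<Longrightarrow> (\<And>u. a \<le> u \<Longrightarrow> u < s \<Longrightarrow> P u) \<Longrightarrow> P s"
    and right: "\<And>s. a \<le> s \<Longrightarrow> (\<And>u. a \<le> u \<Longrightarrow> u \<le> s \<Longrightarrow> P u) \<Longrightarrow> eventually P (at_right s)"
  shows "P t"
proof (rule ccontr)
  assume "\<not> P t"
  define C where "C = {s. a \<le> s \<and> \<not> P s}"
  have "C \<noteq> {}" using \<open>a \<le> t\<close> \<open>\<not> P t\<close> by (auto simp: C_def)
  have bdd: "bdd_below C" by (auto simp: C_def bdd_below_def)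
  define b where "b = Inf C"
  have "a \<le> b" unfolding b_def using \<open>C \<noteq> {}\<close> by (intro cInf_greatest) (auto simp: C_def)
  have below: "P u" if "a \<le> u" "u < b" for u
    using cInf_lower[OF _ bdd, of u] that by (force simp: C_def b_def)
  then have "P b" using left[OF \<open>a \<le> b\<close>] by blast
  with below have upto: "P u" if "a \<le> u" "u \<le> b" for u
    using that by (cases "u < b") auto
  obtain c where "b < c" and above: "\<And>v. b < v \<Longrightarrow> v < c \<Longrightarrow> P v"
    using right[OF \<open>a \<le> b\<close> upto] unfolding eventually_at_right_field by blast
  then obtain x where "x \<in> C" "x < c"
    using cInf_less_iff[OF \<open>C \<noteq> {}\<close> bdd] by (auto simp: b_def)
  moreover have "b \<le> x" using cInf_lower[OF \<open>x \<in> C\<close> bdd] by (simp add: b_def)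
  ultimately show False using \<open>P b\<close> above[of x] by (cases "x = b") (auto simp: C_def)
qed

lemma constant_on_eq: "f constant_on A \<Longrightarrow> x \<in> A \<Longrightarrow> w \<in> A \<Longrightarrow> f w = f x"
  by (auto simp: constant_on_def)

lemma pconst_eventually_constant_left:
  assumes "pconst f"
  shows "\<forall>\<^sub>F u in at_left s. f constant_on {u..<s}"
proof -
  obtain e where "e > 0" and e: "\<And>v. s - e < v \<Longrightarrow> v < s \<Longrightarrow> f v = f (s - e / 2)"
    using assms unfolding pconst_def by blast
  have "\<forall>\<^sub>F u in at_left s. u \<in> {s - e<..<s}"
    using \<open>e > 0\<close> by (intro eventually_at_left_real) simp
  then show ?thesis
    by (rule eventually_mono) (auto simp: constant_on_def intro!: exI[of _ "f (s - e / 2)"] e)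
qed

lemma pconst_eventually_constant_right:
  assumes "pconst f"
  shows "\<forall>\<^sub>F v in at_right s. f constant_on {s..v}"
proof -
  obtain e where "e > 0" and e: "\<And>v. s \<le> v \<Longrightarrow> v < s + e \<Longrightarrow> f v = f s"
    using assms unfolding pconst_def by blast
  have "\<forall>\<^sub>F v in at_right s. v \<in> {s<..<s + e}"
    using \<open>e > 0\<close> by (intro eventually_at_right_real) simp
  then show ?thesis
    by (rule eventually_mono) (auto simp: constant_on_def intro!: exI[of _ "f s"] e)
qed

lemma eventually_at_left_avoids_finite:
  assumes "finite A"
  shows "\<forall>\<^sub>F u in at_left s. \<forall>i\<in>A. f i < s \<longrightarrow> f i < (u::real)"
  using assms
proof (intro eventually_ball_finite ballI)
  fix i
  show "\<forall>\<^sub>F u in at_left s. f i < s \<longrightarrow> f i < u"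
    using eventually_at_left_real[of "f i" s] by (cases "f i < s") (auto elim: eventually_mono)
qed

lemma eventually_at_right_avoids_finite:
  assumes "finite A"
  shows "\<forall>\<^sub>F v in at_right s. \<forall>i\<in>A. s < f i \<longrightarrow> (v::real) < f i"
  using assms
proof (intro eventually_ball_finite ballI)
  fix i
  show "\<forall>\<^sub>F v in at_right s. s < f i \<longrightarrow> v < f i"
    using eventually_at_right_real[of s "f i"] by (cases "s < f i") (auto elim: eventually_mono)
qed

definition occupation :: "(real \<Rightarrow> 'a) \<Rightarrow> ('a \<Rightarrow> bool) \<Rightarrow> real \<Rightarrow> real \<Rightarrow> real set" where
  "occupation f Q a b = {w \<in> {a..<b}. Q (f w)}"

lemma occupation_split:
  "a \<le> b \<Longrightarrow> b \<le> c \<Longrightarrow> occupation f Q a c = occupation f Q a b \<union> occupation f Q b c"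
  by (auto simp: occupation_def)

lemma occupation_constant:
  "f constant_on {a..<b} \<Longrightarrow> occupation f Q a b = (if Q (f a) then {a..<b} else {})"
  by (cases "a < b") (auto simp: occupation_def constant_on_def)

lemma sets_occupation:
  assumes "pconst f"
  shows "occupation f Q a b \<in> sets lborel"
proof (cases "a \<le> b")
  case False
  then show ?thesis by (simp add: occupation_def)
next
  case True
  then show ?thesis
  proof (induction b rule: continuous_induct)
    case (left s)
    show ?case
    proof (cases "s = a")
      case False
      have "\<forall>\<^sub>F u in at_left s. u \<in> {a<..<s} \<and> f constant_on {u..<s}"
        using left.hyps False pconst_eventually_constant_left[OF assms]
        by (intro eventually_conj eventually_at_left_real) auto
      then obtain u where u: "a < u" "u < s" and const: "f constant_on {u..<s}"
        using eventually_happens'[OF trivial_limit_at_left_real] by fastforce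
      then show ?thesis
        using left.IH[of u] occupation_split[of a u s f Q] occupation_constant[OF const] by auto
    qed (simp add: occupation_def)
  next
    case (right s)
    show ?case
      using pconst_eventually_constant_right[OF assms, of s] eventually_at_right_less[of s]
    proof eventually_elim
      case (elim v)
      have "f constant_on {s..<v}" using elim(1) by (rule constant_on_subset) auto
      then show ?case
        using right.IH[of s] right.hyps elim occupation_split[of a s v f Q]
          occupation_constant[of f s v Q] by auto
    qed
  qed
qed

lemma fmeasurable_occupation:
  assumes "pconst f"
  shows "occupation f Q a b \<in> fmeasurable lborel"
proof (rule fmeasurableI2[OF fmeasurable_cbox])
  show "occupation f Q a b \<subseteq> cbox a b" by (auto simp: occupation_def)
qed (rule sets_occupation[OF assms])

lemma measure_occupation_split:
  assumes "pconst f" "a \<le> b" "b \<le> c"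
  shows "measure lborel (occupation f Q a c)
    = measure lborel (occupation f Q a b) + measure lborel (occupation f Q b c)"
proof -
  have "occupation f Q a b \<inter> occupation f Q b c = {}" by (auto simp: occupation_def)
  then show ?thesis
    unfolding occupation_split[OF assms(2,3)]
    using measure_Un3[OF fmeasurable_occupation[OF assms(1)] fmeasurable_occupation[OF assms(1)],
        of Q a b Q b c] by simp
qed

lemma measure_occupation_le:
  assumes "pconst f" "a \<le> b"
  shows "measure lborel (occupation f Q a b) \<le> b - a"
proof -
  have "occupation f Q a b \<subseteq> cbox a b" by (auto simp: occupation_def)
  then have "measure lborel (occupation f Q a b) \<le> measure lborel (cbox a b)"
    using sets_occupation[OF assms(1)] fmeasurable_cbox by (rule measure_mono_fmeasurable)
  then show ?thesis using assms(2) by simp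
qed

lemma measure_occupation_constant:
  assumes "f constant_on {a..<b}" "a \<le> b"
  shows "measure lborel (occupation f Q a b) = (if Q (f a) then b - a else 0)"
  using occupation_constant[OF assms(1)] assms(2) by simp

lemma measure_occupation_pos_imp:
  assumes "0 < measure lborel (occupation f Q a b)"
  shows "\<exists>w\<in>{a..<b}. Q (f w)"
proof (rule ccontr)
  assume "\<not> ?thesis"
  then have "occupation f Q a b = {}" by (auto simp: occupation_def)
  then show False using assms by simp
qed

definition machines_on :: "nat \<Rightarrow> (real \<Rightarrow> nat \<Rightarrow> (nat \<times> nat) option) \<Rightarrow> nat \<Rightarrow> nat \<Rightarrow> real \<Rightarrow> real"
  where "machines_on N \<sigma> i l t = (\<Sum>m<N. if \<sigma> t m = Some (i, l) then 1 else 0)"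

lemma machines_on_eq_0: "(\<And>m. m < N \<Longrightarrow> \<sigma> t m \<noteq> Some (i, l)) \<Longrightarrow> machines_on N \<sigma> i l t = 0"
  by (simp add: machines_on_def)

lemma machines_on_ge_1:
  assumes "m < N" "\<sigma> t m = Some (i, l)"
  shows "1 \<le> machines_on N \<sigma> i l t"
proof -
  have "(\<Sum>m'\<in>{m}. if \<sigma> t m' = Some (i, l) then 1 else 0::real) \<le> machines_on N \<sigma> i l t"
    unfolding machines_on_def using assms(1) by (intro sum_mono2) auto
  then show ?thesis using assms(2) by simp
qed

lemma mproc_nonneg: "0 \<le> mproc N \<sigma> i l t"
  by (simp add: mproc_def sum_nonneg)

lemma mproc_nonpos_time: "t \<le> 0 \<Longrightarrow> mproc N \<sigma> i l t = 0"
  by (simp add: mproc_def)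

lemma mproc_eq_sum_occupation:
  "mproc N \<sigma> i l t = (\<Sum>m<N. measure lborel (occupation \<sigma> (\<lambda>g. g m = Some (i, l)) 0 t))"
  by (simp add: mproc_def occupation_def)

lemma mproc_pos_imp_scheduled:
  assumes "0 < mproc N \<sigma> i l t"
  shows "\<exists>w m. 0 \<le> w \<and> w < t \<and> m < N \<and> \<sigma> w m = Some (i, l)"
proof -
  have "\<exists>m<N. 0 < measure lborel (occupation \<sigma> (\<lambda>g. g m = Some (i, l)) 0 t)"
  proof (rule ccontr)
    assume "\<not> ?thesis"
    then have "measure lborel (occupation \<sigma> (\<lambda>g. g m = Some (i, l)) 0 t) \<le> 0" if "m < N" for m
      using that not_less by blast
    then have "mproc N \<sigma> i l t \<le> 0"
      unfolding mproc_eq_sum_occupation by (intro sum_nonpos) simp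
    then show False using assms by simp
  qed
  then show ?thesis using measure_occupation_pos_imp by fastforce
qed

lemma sproc_eq_occupation:
  "sproc N \<tau> i t = real N * measure lborel (occupation \<tau> (\<lambda>g. g = Some i) 0 t)"
  by (simp add: sproc_def occupation_def)

lemma sproc_constant_step:
  assumes "pconst \<tau>" "\<tau> constant_on {a..<b}" "0 \<le> a" "a \<le> b"
  shows "sproc N \<tau> i b = sproc N \<tau> i a + real N * (b - a) * (if \<tau> a = Some i then 1 else 0)"
  using measure_occupation_split[OF assms(1,3,4), of "\<lambda>g. g = Some i"]
    measure_occupation_constant[OF assms(2,4), of "\<lambda>g. g = Some i"]
  unfolding sproc_eq_occupation by (simp add: distrib_left)

locale piecewise_schedule =
  fixes N :: nat and \<sigma> :: "real \<Rightarrow> nat \<Rightarrow> (nat \<times> nat) option"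
  assumes pconst: "pconst \<sigma>"
begin

lemma mproc_split:
  assumes "0 \<le> a" "a \<le> b"
  shows "mproc N \<sigma> i l b
    = mproc N \<sigma> i l a + (\<Sum>m<N. measure lborel (occupation \<sigma> (\<lambda>g. g m = Some (i, l)) a b))"
proof -
  show ?thesis
    unfolding mproc_eq_sum_occupation sum.distrib[symmetric]
    by (intro sum.cong refl measure_occupation_split[OF pconst assms])
qed

lemma mproc_mono:
  assumes "0 \<le> a" "a \<le> b"
  shows "mproc N \<sigma> i l a \<le> mproc N \<sigma> i l b"
proof -
  have "0 \<le> (\<Sum>m<N. measure lborel (occupation \<sigma> (\<lambda>g. g m = Some (i, l)) a b))"
    by (simp add: sum_nonneg)
  then show ?thesis using mproc_split[OF assms, of i l] by linarith
qed

lemma mproc_le_add: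
  assumes "0 \<le> a" "a \<le> b"
  shows "mproc N \<sigma> i l b \<le> mproc N \<sigma> i l a + real N * (b - a)"
proof -
  have "(\<Sum>m<N. measure lborel (occupation \<sigma> (\<lambda>g. g m = Some (i, l)) a b)) \<le> (\<Sum>m<N. b - a)"
    using assms(2) by (intro sum_mono measure_occupation_le[OF pconst])
  then show ?thesis using mproc_split[OF assms, of i l] by simp
qed

lemma continuous_on_mproc: "continuous_on {0..} (mproc N \<sigma> i l)"
proof (rule lipschitz_on_continuous_on)
  have le: "dist (mproc N \<sigma> i l a) (mproc N \<sigma> i l b) \<le> real N * dist a b"
    if "0 \<le> a" "a \<le> b" for a b
  proof -
    have "dist (mproc N \<sigma> i l a) (mproc N \<sigma> i l b) = mproc N \<sigma> i l b - mproc N \<sigma> i l a"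
      using mproc_mono[OF that] by (simp add: dist_real_def)
    also have "\<dots> \<le> real N * (b - a)"
      using mproc_le_add[OF that, of i l] by linarith
    also have "\<dots> = real N * dist a b"
      using that by (simp add: dist_real_def)
    finally show ?thesis .
  qed
  show "(real N)-lipschitz_on {0..} (mproc N \<sigma> i l)"
  proof (rule lipschitz_onI)
    fix a b :: real assume "a \<in> {0..}" "b \<in> {0..}"
    show "dist (mproc N \<sigma> i l a) (mproc N \<sigma> i l b) \<le> real N * dist a b"
    proof (cases "a \<le> b")
      case True
      with \<open>a \<in> {0..}\<close> show ?thesis by (intro le) auto
    next
      case False
      with \<open>b \<in> {0..}\<close> have "dist (mproc N \<sigma> i l b) (mproc N \<sigma> i l a) \<le> real N * dist b a"
        by (intro le) auto
      then show ?thesis by (simp only: dist_commute)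
    qed
  qed simp
qed

lemma mproc_constant_step:
  assumes "\<sigma> constant_on {a..<b}" "0 \<le> a" "a \<le> b"
  shows "mproc N \<sigma> i l b = mproc N \<sigma> i l a + (b - a) * machines_on N \<sigma> i l a"
proof -
  have "(\<Sum>m<N. measure lborel (occupation \<sigma> (\<lambda>g. g m = Some (i, l)) a b))
      = (b - a) * machines_on N \<sigma> i l a"
    unfolding machines_on_def sum_distrib_left
    by (intro sum.cong refl) (simp add: measure_occupation_constant[OF assms(1,3)])
  then show ?thesis using mproc_split[OF assms(2,3), of i l] by linarith
qed

lemma mrem_antimono: "0 \<le> a \<Longrightarrow> a \<le> b \<Longrightarrow> mrem N p \<sigma> i l b \<le> mrem N p \<sigma> i l a"
  using mproc_mono by (simp add: mrem_def)

lemma mrem_constant_step: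
  "\<sigma> constant_on {a..<b} \<Longrightarrow> 0 \<le> a \<Longrightarrow> a \<le> b \<Longrightarrow>
    mrem N p \<sigma> i l b = mrem N p \<sigma> i l a - (b - a) * machines_on N \<sigma> i l a"
  by (simp add: mrem_def mproc_constant_step)

lemma mjrem_antimono: "0 \<le> a \<Longrightarrow> a \<le> b \<Longrightarrow> mjrem N k p \<sigma> i b \<le> mjrem N k p \<sigma> i a"
  unfolding mjrem_def by (intro sum_mono mrem_antimono)

lemma mjrem_constant_step:
  "\<sigma> constant_on {a..<b} \<Longrightarrow> 0 \<le> a \<Longrightarrow> a \<le> b \<Longrightarrow>
    mjrem N k p \<sigma> i b = mjrem N k p \<sigma> i a - (b - a) * (\<Sum>l<k i. machines_on N \<sigma> i l a)"
  by (simp add: mjrem_def mrem_constant_step sum_subtractf sum_distrib_left)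

lemma continuous_on_mjrem: "continuous_on {0..} (mjrem N k p \<sigma> i)"
  unfolding mjrem_def[abs_def] mrem_def by (intro continuous_intros continuous_on_mproc)

end

subsection \<open>Invariants of M-SRPT schedules\<close>

locale msrpt =
  fixes N n :: nat and r :: "nat \<Rightarrow> real" and k :: "nat \<Rightarrow> nat"
    and p :: "nat \<Rightarrow> nat \<Rightarrow> real" and np :: "nat \<Rightarrow> nat \<Rightarrow> bool"
    and \<sigma> :: "real \<Rightarrow> nat \<Rightarrow> (nat \<times> nat) option"
  assumes p_nonneg: "\<And>i l. i < n \<Longrightarrow> l < k i \<Longrightarrow> 0 \<le> p i l"
    and schedule: "msrpt_schedule N n r k p np \<sigma>"
begin

sublocale piecewise_schedule N \<sigma>
  using schedule by unfold_locales (simp add: msrpt_schedule_def)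

abbreviation "MP \<equiv> mproc N \<sigma>"
abbreviation "MR \<equiv> mrem N p \<sigma>"
abbreviation "MJ \<equiv> mjrem N k p \<sigma>"

definition workload :: "nat \<Rightarrow> real" where
  "workload i = (\<Sum>l<k i. p i l)"

definition running :: "nat \<Rightarrow> nat \<Rightarrow> real \<Rightarrow> bool" where
  "running i l t \<longleftrightarrow> (\<exists>m<N. \<sigma> t m = Some (i, l))"

lemma scheduled_task_valid:
  "0 \<le> t \<Longrightarrow> m < N \<Longrightarrow> \<sigma> t m = Some (i, l) \<Longrightarrow> i < n \<and> l < k i \<and> r i \<le> t \<and> 0 < MR i l t"
  using schedule[unfolded msrpt_schedule_def, THEN conjunct2, THEN conjunct1] by blast

lemma scheduled_machine_unique:
  "0 \<le> t \<Longrightarrow> m < N \<Longrightarrow> m' < N \<Longrightarrow> \<sigma> t m = Some x \<Longrightarrow> \<sigma> t m' = Some x \<Longrightarrow> m = m'"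
  using schedule[unfolded msrpt_schedule_def, THEN conjunct2, THEN conjunct2, THEN conjunct1]
  by (metis option.distinct(1))

lemma nonpreemptive_continues:
  "0 \<le> s \<Longrightarrow> s \<le> t \<Longrightarrow> m < N \<Longrightarrow> np i l \<Longrightarrow> \<sigma> s m = Some (i, l) \<Longrightarrow> 0 < MR i l t \<Longrightarrow>
    \<sigma> t m = Some (i, l)"
  using schedule[unfolded msrpt_schedule_def, THEN conjunct2, THEN conjunct2, THEN conjunct2,
      THEN conjunct1] by blast

lemma priority_rule:
  "0 \<le> t \<Longrightarrow> j < n \<Longrightarrow> l < k j \<Longrightarrow> r j \<le> t \<Longrightarrow> 0 < MR j l t \<Longrightarrow> \<not> running j l t \<Longrightarrow>
    \<not> np j l \<or> MP j l t = 0 \<Longrightarrow> m < N \<Longrightarrow>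
    \<exists>i' l'. \<sigma> t m = Some (i', l') \<and> (np i' l' \<and> 0 < MP i' l' t \<or> MJ i' t \<le> MJ j t)"
  using schedule[unfolded msrpt_schedule_def, THEN conjunct2, THEN conjunct2, THEN conjunct2,
      THEN conjunct2] unfolding running_def by blast

lemma machines_on_not_running: "\<not> running i l t \<Longrightarrow> machines_on N \<sigma> i l t = 0"
  unfolding running_def by (rule machines_on_eq_0) blast

lemma mproc_before_release:
  assumes "t \<le> r i"
  shows "MP i l t = 0"
proof (rule ccontr)
  assume "MP i l t \<noteq> 0"
  then have "0 < MP i l t" using mproc_nonneg[of N \<sigma> i l t] by simp
  then obtain w m where "0 \<le> w" "w < t" "m < N" "\<sigma> w m = Some (i, l)"
    using mproc_pos_imp_scheduled by blast
  then show False using scheduled_task_valid[of w m i l] assms by linarith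
qed

lemma mrem_nonneg:
  assumes "i < n" "l < k i" "0 \<le> t"
  shows "0 \<le> MR i l t"
proof (rule ccontr)
  assume "\<not> 0 \<le> MR i l t"
  then have "p i l \<le> MP i l t" by (simp add: mrem_def)
  moreover have "MP i l 0 \<le> p i l" using p_nonneg[OF assms(1,2)] by (simp add: mproc_nonpos_time)
  moreover have "continuous_on {0..t} (MP i l)"
    using continuous_on_mproc by (rule continuous_on_subset) auto
  ultimately obtain t0 where t0: "0 \<le> t0" "t0 \<le> t" and "MP i l t0 = p i l"
    using IVT'[of "MP i l" 0 "p i l" t] assms(3) by blast
  \<comment> \<open>once the task's work is done it is never scheduled again, so its processed amount stays put\<close>
  have "measure lborel (occupation \<sigma> (\<lambda>g. g m = Some (i, l)) t0 t) = 0" if "m < N" for m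
  proof -
    have "\<sigma> w m \<noteq> Some (i, l)" if "t0 \<le> w" for w
    proof
      assume "\<sigma> w m = Some (i, l)"
      then have "0 < MR i l w" using scheduled_task_valid \<open>m < N\<close> t0(1) that by auto
      moreover have "p i l \<le> MP i l w"
        using mproc_mono[OF t0(1) that, of i l] \<open>MP i l t0 = p i l\<close> by simp
      ultimately show False by (simp add: mrem_def)
    qed
    then have "occupation \<sigma> (\<lambda>g. g m = Some (i, l)) t0 t = {}" by (auto simp: occupation_def)
    then show ?thesis by simp
  qed
  then have "MP i l t = MP i l t0" using mproc_split[OF t0, of i l] by simp
  then show False using \<open>\<not> 0 \<le> MR i l t\<close> \<open>MP i l t0 = p i l\<close> by (simp add: mrem_def)
qed

lemma mjrem_nonneg: "i < n \<Longrightarrow> 0 \<le> t \<Longrightarrow> 0 \<le> MJ i t"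
  unfolding mjrem_def by (intro sum_nonneg mrem_nonneg) auto

lemma mrem_le_mjrem:
  assumes "i < n" "l < k i" "0 \<le> t"
  shows "MR i l t \<le> MJ i t"
proof -
  have "(\<Sum>l'\<in>{l}. MR i l' t) \<le> (\<Sum>l'<k i. MR i l' t)"
    using assms by (intro sum_mono2) (auto intro: mrem_nonneg)
  then show ?thesis by (simp add: mjrem_def)
qed

lemma mjrem_before_release: "t \<le> r i \<Longrightarrow> MJ i t = workload i"
  by (simp add: mjrem_def mrem_def mproc_before_release workload_def)

lemma started_nonpreemptive_stays:
  assumes "0 \<le> u" "u < s" "\<sigma> constant_on {u..<s}"
    and "m < N" "\<sigma> s m = Some (i, l)" "np i l" "0 < MP i l s"
  shows "\<sigma> u m = Some (i, l)"
proof -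
  have "0 < MR i l s" using scheduled_task_valid assms(1,2,4,5) by force
  moreover have "MR i l s \<le> MR i l u" using assms(1,2) by (intro mrem_antimono) auto
  ultimately have "0 < MR i l u" by simp
  obtain w m' where w: "0 \<le> w" "w < s" "m' < N" "\<sigma> w m' = Some (i, l)"
    using mproc_pos_imp_scheduled[OF assms(7)] by blast
  have "\<sigma> u m' = Some (i, l)"
  proof (cases "u \<le> w")
    case True
    then show ?thesis using constant_on_eq[OF assms(3), of u w] w assms(2) by auto
  next
    case False
    then show ?thesis using nonpreemptive_continues[OF w(1) _ w(3) assms(6) w(4) \<open>0 < MR i l u\<close>] by simp
  qed
  then have "\<sigma> s m' = Some (i, l)"
    using nonpreemptive_continues[OF assms(1) _ w(3) assms(6) _ \<open>0 < MR i l s\<close>] assms(2) by simp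
  then have "m' = m" using scheduled_machine_unique[of s m' m "(i, l)"] w(3) assms(1,2,4,5) by simp
  then show ?thesis using \<open>\<sigma> u m' = Some (i, l)\<close> by simp
qed

end

subsection \<open>The potential\<close>

lemma p_le_eta: "i < n \<Longrightarrow> l < k i \<Longrightarrow> np i l \<Longrightarrow> p i l \<le> eta n k p np"
  and eta_nonneg: "0 \<le> eta n k p np"
proof -
  have "{p i l |i l. i < n \<and> l < k i \<and> np i l} \<subseteq> (\<lambda>(i, l). p i l) ` (SIGMA i:{..<n}. {..<k i})"
    by auto
  then have "finite {p i l |i l. i < n \<and> l < k i \<and> np i l}"
    by (rule finite_subset) auto
  then have "finite ({0} \<union> {p i l |i l. i < n \<and> l < k i \<and> np i l})" by simp
  then show "0 \<le> eta n k p np" "i < n \<Longrightarrow> l < k i \<Longrightarrow> np i l \<Longrightarrow> p i l \<le> eta n k p np"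
    unfolding eta_def by (auto intro: Max_ge)
qed

locale msrpt_comparison = msrpt +
  fixes \<tau> :: "real \<Rightarrow> nat option" and y :: real
  assumes \<tau>_pconst: "pconst \<tau>"
    and \<tau>_released: "\<And>t i. 0 \<le> t \<Longrightarrow> \<tau> t = Some i \<Longrightarrow> r i \<le> t"
    and y_nonneg: "0 \<le> y"
begin

abbreviation "SR \<equiv> srem N k p \<tau>"

lemma srem_constant_step:
  "\<tau> constant_on {a..<b} \<Longrightarrow> 0 \<le> a \<Longrightarrow> a \<le> b \<Longrightarrow>
    SR i b = SR i a - real N * (b - a) * (if \<tau> a = Some i then 1 else 0)"
  by (simp add: srem_def sproc_constant_step[OF \<tau>_pconst])

lemma srem_before_release:
  assumes "t \<le> r i"
  shows "SR i t = workload i"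
proof -
  have "occupation \<tau> (\<lambda>g. g = Some i) 0 t = {}"
    using \<tau>_released assms by (force simp: occupation_def)
  then show ?thesis by (simp add: srem_def workload_def sproc_eq_occupation)
qed

definition small_part :: "real \<Rightarrow> real" where
  "small_part x = (if 0 < x \<and> x \<le> y then x else 0)"

definition Wjob :: "(nat \<Rightarrow> real \<Rightarrow> real) \<Rightarrow> nat \<Rightarrow> real \<Rightarrow> real" where
  "Wjob R i t = (if r i \<le> t then small_part (R i t) else 0)"

lemma Wle_eq_sum_Wjob: "Wle n r R y t = (\<Sum>i<n. Wjob R i t)"
proof -
  have "Wjob R i t = (if r i \<le> t \<and> 0 < R i t \<and> R i t \<le> y then R i t else 0)" for i
    by (simp add: Wjob_def small_part_def)
  then have "(\<Sum>i<n. Wjob R i t) = (\<Sum>i<n. if r i \<le> t \<and> 0 < R i t \<and> R i t \<le> y then R i t else 0)"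
    by (simp only:)
  also have "\<dots> = (\<Sum>i\<in>{i \<in> {..<n}. r i \<le> t \<and> 0 < R i t \<and> R i t \<le> y}. R i t)"
    by (rule sum.inter_filter[symmetric]) simp
  also have "{i \<in> {..<n}. r i \<le> t \<and> 0 < R i t \<and> R i t \<le> y}
      = {i. i < n \<and> r i \<le> t \<and> 0 < R i t \<and> R i t \<le> y}"
    by auto
  finally show ?thesis by (simp add: Wle_def)
qed

lemma small_part_nonneg: "0 \<le> small_part x"
  by (simp add: small_part_def)

lemma small_part_le: "small_part x \<le> y"
  using y_nonneg by (simp add: small_part_def)

lemma Wjob_nonneg: "0 \<le> Wjob R i t"
  by (simp add: Wjob_def small_part_nonneg)

lemma Wjob_le: "Wjob R i t \<le> y"
  by (simp add: Wjob_def small_part_le y_nonneg)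

definition small_task_waiting :: "real \<Rightarrow> bool" where
  "small_task_waiting t \<longleftrightarrow> (\<exists>j<n. \<exists>l<k j. r j \<le> t \<and> 0 < MR j l t \<and> \<not> running j l t \<and>
     (\<not> np j l \<or> MP j l t = 0) \<and> MJ j t \<le> y)"

definition idle_tasks :: "nat \<Rightarrow> real \<Rightarrow> nat set" where
  "idle_tasks i t = {l. l < k i \<and> \<not> running i l t}"

definition kappa :: "nat \<Rightarrow> real \<Rightarrow> real" where
  "kappa i t = (if y < MJ i t \<and> (\<exists>l<k i. running i l t) \<and> (\<Sum>l\<in>idle_tasks i t. MR i l t) \<le> y
     then y else 0)"

definition np_backlog :: "nat \<Rightarrow> real \<Rightarrow> real" where
  "np_backlog m t = (case \<sigma> t m of None \<Rightarrow> 0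
     | Some (i, l) \<Rightarrow> if np i l \<and> y < MJ i t then MR i l t else 0)"

definition arrival :: "nat \<Rightarrow> real \<Rightarrow> real \<Rightarrow> real" where
  "arrival i a b = (if a < r i \<and> r i = b then small_part (workload i) else 0)"

definition job_potential :: "nat \<Rightarrow> real \<Rightarrow> real" where
  "job_potential i t = Wjob MJ i t + kappa i t - Wjob SR i t"

definition potential :: "real \<Rightarrow> real" where
  "potential t = (\<Sum>i<n. job_potential i t) + (\<Sum>m<N. np_backlog m t)"

lemma kappa_nonneg: "0 \<le> kappa i t"
  using y_nonneg by (simp add: kappa_def)

lemma kappa_le: "kappa i t \<le> y"
  using y_nonneg by (simp add: kappa_def)

lemma kappa_eq_0_if_small: "MJ i t \<le> y \<Longrightarrow> kappa i t = 0"
  by (simp add: kappa_def)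

lemma arrival_nonneg: "0 \<le> arrival i a b"
  by (simp add: arrival_def small_part_nonneg)

lemma np_backlog_nonneg:
  assumes "0 \<le> t" "m < N"
  shows "0 \<le> np_backlog m t"
  using scheduled_task_valid[OF assms] by (auto simp: np_backlog_def split: option.split)

lemma np_backlog_le_eta:
  assumes "0 \<le> t" "m < N"
  shows "np_backlog m t \<le> eta n k p np"
proof (cases "\<sigma> t m")
  case (Some x)
  obtain i l where x: "x = (i, l)" by (cases x)
  have "i < n" "l < k i" using scheduled_task_valid[OF assms] Some x by auto
  then have "np i l \<Longrightarrow> MR i l t \<le> eta n k p np"
    using p_le_eta[of i n l k np p] mproc_nonneg[of N \<sigma> i l t] by (fastforce simp: mrem_def)
  then show ?thesis using Some x eta_nonneg by (simp add: np_backlog_def)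
qed (simp add: np_backlog_def eta_nonneg)

lemma small_alive_job_running:
  assumes "0 \<le> t" "\<not> small_task_waiting t" "i < n" "r i \<le> t" "0 < MJ i t" "MJ i t \<le> y"
  shows "\<exists>l. running i l t"
proof -
  have "\<exists>l<k i. 0 < MR i l t"
  proof (rule ccontr)
    assume "\<not> ?thesis"
    then have "MR i l t \<le> 0" if "l < k i" for l using that by force
    then have "MJ i t \<le> 0" unfolding mjrem_def by (intro sum_nonpos) simp
    then show False using assms(5) by simp
  qed
  then obtain l where l: "l < k i" "0 < MR i l t" by blast
  have "running i l t"
  proof (rule ccontr)
    assume "\<not> running i l t"
    then have "np i l \<and> MP i l t \<noteq> 0"
      using assms(2-4,6) l unfolding small_task_waiting_def by blast
    then have "np i l" "0 < MP i l t" using mproc_nonneg[of N \<sigma> i l t] by auto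
    then obtain w m where w: "0 \<le> w" "w < t" "m < N" "\<sigma> w m = Some (i, l)"
      using mproc_pos_imp_scheduled by blast
    then have "\<sigma> t m = Some (i, l)"
      using nonpreemptive_continues[OF w(1) _ w(3) \<open>np i l\<close> w(4) l(2)] by simp
    then show False using \<open>\<not> running i l t\<close> \<open>m < N\<close> by (auto simp: running_def)
  qed
  then show ?thesis by blast
qed

lemma job_potential_not_waiting:
  assumes "0 \<le> t" "\<not> small_task_waiting t" "i < n"
  shows "job_potential i t \<le> (if \<exists>l. running i l t then y else 0)"
proof -
  have "Wjob MJ i t + kappa i t \<le> (if \<exists>l. running i l t then y else 0)"
  proof (cases "y < MJ i t")
    case True
    then have "Wjob MJ i t = 0" by (simp add: Wjob_def small_part_def)
    moreover have "kappa i t \<le> (if \<exists>l. running i l t then y else 0)"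
      using kappa_le[of i t] by (auto simp: kappa_def)
    ultimately show ?thesis by simp
  next
    case False
    then have "Wjob MJ i t \<le> (if \<exists>l. running i l t then y else 0)"
      using Wjob_le[of MJ i t] small_alive_job_running[OF assms]
      by (auto simp: Wjob_def small_part_def)
    then show ?thesis using kappa_eq_0_if_small False by simp
  qed
  then show ?thesis using Wjob_nonneg[of SR i t] by (simp add: job_potential_def)
qed

lemma card_running_jobs: "card {i. i < n \<and> (\<exists>l. running i l t)} \<le> N"
proof -
  have "{i. i < n \<and> (\<exists>l. running i l t)} \<subseteq> (\<lambda>m. fst (the (\<sigma> t m))) ` {..<N}"
    by (force simp: running_def)
  then have "card {i. i < n \<and> (\<exists>l. running i l t)} \<le> card ((\<lambda>m. fst (the (\<sigma> t m))) ` {..<N})"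
    by (intro card_mono) auto
  also have "\<dots> \<le> N" using card_image_le[of "{..<N}"] by simp
  finally show ?thesis .
qed

lemma potential_not_waiting:
  assumes "0 \<le> t" "\<not> small_task_waiting t"
  shows "potential t \<le> real N * y + real N * eta n k p np"
proof -
  have "(\<Sum>i<n. job_potential i t) \<le> (\<Sum>i<n. if \<exists>l. running i l t then y else 0)"
    using job_potential_not_waiting[OF assms] by (intro sum_mono) simp
  also have "\<dots> = y * real (card {i. i < n \<and> (\<exists>l. running i l t)})"
    by (simp add: sum.If_cases Int_def)
  also have "\<dots> \<le> y * real N"
    using card_running_jobs y_nonneg by (intro mult_left_mono) auto
  finally have "(\<Sum>i<n. job_potential i t) \<le> real N * y" by (simp add: mult.commute)
  moreover have "(\<Sum>m<N. np_backlog m t) \<le> (\<Sum>m<N. eta n k p np)"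
    using np_backlog_le_eta[OF assms(1)] by (intro sum_mono) simp
  ultimately show ?thesis by (simp add: potential_def)
qed

lemma waiting_machine_busy:
  assumes "small_task_waiting t" "0 \<le> t" "m < N"
  obtains i l where "\<sigma> t m = Some (i, l)" "np i l \<and> 0 < MP i l t \<or> MJ i t \<le> y"
proof -
  obtain j l where "j < n" "l < k j" "r j \<le> t" "0 < MR j l t" "\<not> running j l t"
    "\<not> np j l \<or> MP j l t = 0" "MJ j t \<le> y"
    using assms(1) unfolding small_task_waiting_def by blast
  with priority_rule[OF assms(2) this(1-6) assms(3)] that show ?thesis by force
qed

lemma waiting_big_job_runs_started_np:
  "small_task_waiting t \<Longrightarrow> 0 \<le> t \<Longrightarrow> m < N \<Longrightarrow> \<sigma> t m = Some (i, l) \<Longrightarrow> y < MJ i t \<Longrightarrow>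
    np i l \<and> 0 < MP i l t"
  by (erule waiting_machine_busy) auto

lemma potential_at_0:
  assumes "small_task_waiting 0"
  shows "potential 0 \<le> 0"
proof -
  have no_big_running: "\<not> (\<sigma> 0 m = Some (i, l) \<and> y < MJ i 0)" if "m < N" for m i l
    using waiting_big_job_runs_started_np[OF assms _ that] mproc_nonpos_time[of 0] by auto
  have "kappa i 0 = 0" for i
    using no_big_running by (auto simp: kappa_def running_def)
  moreover have "MJ i 0 = SR i 0" for i
    by (simp add: mjrem_def mrem_def srem_def sproc_def mproc_nonpos_time)
  ultimately have "job_potential i 0 = 0" for i by (simp add: job_potential_def Wjob_def)
  moreover have "np_backlog m 0 = 0" if "m < N" for m
    using no_big_running[OF that] by (auto simp: np_backlog_def split: option.split)
  ultimately show ?thesis by (simp add: potential_def)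
qed

lemma small_part_mono: "x \<le> x' \<Longrightarrow> x' \<le> y \<Longrightarrow> small_part x \<le> small_part x'"
  by (simp add: small_part_def)

lemma small_part_diff: "0 \<le> d \<Longrightarrow> small_part x - d \<le> small_part (x - d)"
  by (simp add: small_part_def)

lemma sum_mrem_le_mjrem:
  assumes "L \<subseteq> {..<k i}" "i < n" "0 \<le> t"
  shows "(\<Sum>l\<in>L. MR i l t) \<le> MJ i t"
  unfolding mjrem_def using assms by (intro sum_mono2) (auto intro: mrem_nonneg)

lemma mrem_constant_if_not_running:
  "\<sigma> constant_on {u..<s} \<Longrightarrow> 0 \<le> u \<Longrightarrow> u \<le> s \<Longrightarrow> \<not> running i l u \<Longrightarrow> MR i l s = MR i l u"
  by (simp add: mrem_constant_step machines_on_not_running)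

lemma Wjob_srem_step:
  assumes "\<tau> constant_on {a..<b}" "0 \<le> a" "a \<le> b" "r i \<le> b \<longrightarrow> r i \<le> a \<or> r i = b"
  shows "Wjob SR i a - real N * (b - a) * (if \<tau> a = Some i then 1 else 0) + arrival i a b
    \<le> Wjob SR i b"
proof -
  define d where "d = real N * (b - a) * (if \<tau> a = Some i then 1 else 0)"
  have "0 \<le> d" using assms(3) by (simp add: d_def)
  have SR_b: "SR i b = SR i a - d" unfolding d_def by (rule srem_constant_step[OF assms(1-3)])
  consider "r i \<le> a" | "r i = b" "a < r i" | "b < r i"
    using assms(4) by fastforce
  then show ?thesis
  proof cases
    case 1
    then show ?thesis using small_part_diff[OF \<open>0 \<le> d\<close>] SR_b assms(3)
      by (simp add: Wjob_def arrival_def d_def)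
  next
    case 2
    then show ?thesis using srem_before_release[of b i] \<open>0 \<le> d\<close>
      by (simp add: Wjob_def arrival_def d_def)
  next
    case 3
    then show ?thesis using \<open>0 \<le> d\<close> assms(3) by (simp add: Wjob_def arrival_def d_def)
  qed
qed

lemma sum_if_eq_Some_le_1: "finite A \<Longrightarrow> (\<Sum>i\<in>A. if x = Some i then 1 else 0 :: real) \<le> 1"
  by (cases x) auto

subsection \<open>Left limits while a small task waits\<close>

lemma sum_idle_tasks_mrem_constant:
  "\<sigma> constant_on {u..<s} \<Longrightarrow> 0 \<le> u \<Longrightarrow> u \<le> s \<Longrightarrow>
    (\<Sum>l\<in>idle_tasks i u. MR i l s) = (\<Sum>l\<in>idle_tasks i u. MR i l u)"
  by (intro sum.cong refl mrem_constant_if_not_running) (auto simp: idle_tasks_def)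

lemma kappa_before_crossing:
  assumes "0 \<le> u" "u \<le> s" "\<sigma> constant_on {u..<s}" "i < n" "y < MJ i u" "MJ i s \<le> y"
  shows "kappa i u = y"
proof -
  have "\<exists>l<k i. running i l u"
  proof (rule ccontr)
    assume "\<not> ?thesis"
    then have "MJ i s = MJ i u" unfolding mjrem_def
      using mrem_constant_if_not_running[OF assms(3,1,2)] by (intro sum.cong) auto
    then show False using assms(5,6) by simp
  qed
  moreover have "(\<Sum>l\<in>idle_tasks i u. MR i l u) \<le> y"
  proof -
    have "(\<Sum>l\<in>idle_tasks i u. MR i l u) = (\<Sum>l\<in>idle_tasks i u. MR i l s)"
      using sum_idle_tasks_mrem_constant[OF assms(3,1,2)] by simp
    also have "\<dots> \<le> MJ i s"
      using assms(1,2,4) by (intro sum_mrem_le_mjrem) (auto simp: idle_tasks_def)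
    finally show ?thesis using assms(6) by simp
  qed
  ultimately show ?thesis using assms(5) by (simp add: kappa_def)
qed

lemma running_before_if_big:
  assumes "0 \<le> u" "u < s" "\<sigma> constant_on {u..<s}" "small_task_waiting s"
    and "running i l s" "y < MJ i s"
  shows "running i l u"
proof -
  obtain m where m: "m < N" "\<sigma> s m = Some (i, l)" using assms(5) by (auto simp: running_def)
  then have "np i l \<and> 0 < MP i l s"
    using waiting_big_job_runs_started_np[OF assms(4)] assms(1,2,6) by simp
  then have "\<sigma> u m = Some (i, l)"
    using started_nonpreemptive_stays[OF assms(1-3) m] by blast
  then show ?thesis using m(1) by (auto simp: running_def)
qed

lemma kappa_left:
  assumes "0 \<le> u" "u < s" "\<sigma> constant_on {u..<s}" "small_task_waiting s" "i < n"
  shows "kappa i s \<le> kappa i u"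
proof (cases "kappa i s = 0")
  case False
  then obtain l0 where "l0 < k i" "running i l0 s" and big: "y < MJ i s"
    and idle_s: "(\<Sum>l\<in>idle_tasks i s. MR i l s) \<le> y"
    by (auto simp: kappa_def split: if_splits)
  have run_u: "running i l u" if "running i l s" for l
    using running_before_if_big[OF assms(1-4) that big] .
  have "(\<Sum>l\<in>idle_tasks i u. MR i l u) = (\<Sum>l\<in>idle_tasks i u. MR i l s)"
    using sum_idle_tasks_mrem_constant[OF assms(3,1)] assms(2) by simp
  also have "\<dots> \<le> (\<Sum>l\<in>idle_tasks i s. MR i l s)"
    using run_u assms(1,2,5) by (intro sum_mono2) (auto simp: idle_tasks_def intro: mrem_nonneg)
  finally have "(\<Sum>l\<in>idle_tasks i u. MR i l u) \<le> y" using idle_s by simp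
  moreover have "MJ i s \<le> MJ i u" using assms(1,2) by (intro mjrem_antimono) auto
  then have "y < MJ i u" using big by simp
  ultimately have "kappa i u = y"
    using \<open>l0 < k i\<close> run_u[OF \<open>running i l0 s\<close>] by (auto simp: kappa_def)
  then show ?thesis using kappa_le by simp
qed (simp add: kappa_nonneg)

lemma Wjob_mjrem_left:
  assumes "0 \<le> u" "u < s" "\<sigma> constant_on {u..<s}" "r i \<le> s \<longrightarrow> r i \<le> u \<or> r i = s"
    and "i < n" "MJ i s \<le> y"
  shows "Wjob MJ i s \<le> Wjob MJ i u + kappa i u + arrival i u s"
proof (cases "r i \<le> u")
  case False
  then have "Wjob MJ i s \<le> arrival i u s"
    using assms(4) mjrem_before_release[of s i] by (auto simp: Wjob_def arrival_def)
  then show ?thesis using Wjob_nonneg[of MJ i u] kappa_nonneg[of i u] by simp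
next
  case released: True
  have "MJ i s \<le> MJ i u" using assms(1,2) by (intro mjrem_antimono) auto
  show ?thesis
  proof (cases "MJ i u \<le> y")
    case True
    then have "Wjob MJ i s \<le> Wjob MJ i u"
      using released assms(2) small_part_mono[OF \<open>MJ i s \<le> MJ i u\<close>] by (simp add: Wjob_def)
    then show ?thesis using kappa_nonneg[of i u] arrival_nonneg[of i u s] by simp
  next
    case False
    then have "kappa i u = y"
      using kappa_before_crossing[OF assms(1) _ assms(3,5)] assms(2,6) by simp
    then show ?thesis
      using Wjob_le[of MJ i s] Wjob_nonneg[of MJ i u] arrival_nonneg[of i u s] by simp
  qed
qed

lemma Wjob_kappa_left:
  assumes "0 \<le> u" "u < s" "\<sigma> constant_on {u..<s}" "r i \<le> s \<longrightarrow> r i \<le> u \<or> r i = s"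
    and "small_task_waiting s" "i < n"
  shows "Wjob MJ i s + kappa i s \<le> Wjob MJ i u + kappa i u + arrival i u s"
proof (cases "MJ i s \<le> y")
  case True
  then show ?thesis using Wjob_mjrem_left[OF assms(1-4,6)] kappa_eq_0_if_small by simp
next
  case False
  then have "Wjob MJ i s = 0" by (simp add: Wjob_def small_part_def)
  then show ?thesis
    using kappa_left[OF assms(1-3,5,6)] Wjob_nonneg[of MJ i u] arrival_nonneg[of i u s] by simp
qed

lemma np_backlog_left:
  assumes "0 \<le> u" "u < s" "\<sigma> constant_on {u..<s}" "small_task_waiting s" "m < N"
  shows "np_backlog m s \<le> np_backlog m u"
proof (cases "\<exists>i l. \<sigma> s m = Some (i, l) \<and> np i l \<and> y < MJ i s")
  case True
  then obtain i l where il: "\<sigma> s m = Some (i, l)" "np i l" "y < MJ i s" by blast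
  then have "np i l \<and> 0 < MP i l s"
    using waiting_big_job_runs_started_np[OF assms(4) _ assms(5)] assms(1,2) by simp
  then have "\<sigma> u m = Some (i, l)" using started_nonpreemptive_stays[OF assms(1-3,5) il(1)] by blast
  moreover have "MJ i s \<le> MJ i u" using assms(1,2) by (intro mjrem_antimono) auto
  then have "y < MJ i u" using il(3) by simp
  moreover have "MR i l s \<le> MR i l u" using assms(1,2) by (intro mrem_antimono) auto
  ultimately show ?thesis using il by (simp add: np_backlog_def)
next
  case False
  then have "np_backlog m s = 0" by (auto simp: np_backlog_def split: option.split)
  then show ?thesis using np_backlog_nonneg[OF assms(1,5)] by simp
qed

lemma potential_left_step:
  assumes "0 \<le> u" "u < s" "\<sigma> constant_on {u..<s}" "\<tau> constant_on {u..<s}"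
    and "\<forall>i<n. r i \<le> s \<longrightarrow> r i \<le> u \<or> r i = s" "small_task_waiting s"
  shows "potential s \<le> potential u + real N * (s - u)"
proof -
  define ind where "ind i = (if \<tau> u = Some i then 1 else 0 :: real)" for i
  have "job_potential i s \<le> job_potential i u + real N * (s - u) * ind i" if "i < n" for i
    using Wjob_kappa_left[OF assms(1-3) _ assms(6) that] assms(5) that
      Wjob_srem_step[OF assms(4,1), where i=i] assms(2)
    by (fastforce simp: job_potential_def ind_def)
  then have "(\<Sum>i<n. job_potential i s) \<le> (\<Sum>i<n. job_potential i u + real N * (s - u) * ind i)"
    by (intro sum_mono) simp
  also have "\<dots> = (\<Sum>i<n. job_potential i u) + real N * (s - u) * (\<Sum>i<n. ind i)"
    by (simp add: sum.distrib sum_distrib_left)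
  also have "\<dots> \<le> (\<Sum>i<n. job_potential i u) + real N * (s - u)"
    using sum_if_eq_Some_le_1[of "{..<n}" "\<tau> u"] assms(2)
    by (simp add: ind_def mult_left_le)
  finally show ?thesis
    using sum_mono[of "{..<N}" "\<lambda>m. np_backlog m s" "\<lambda>m. np_backlog m u"]
      np_backlog_left[OF assms(1-3,6)] by (simp add: potential_def)
qed

subsection \<open>Right neighbourhoods while a small task waits\<close>

definition small_alive :: "nat \<Rightarrow> real \<Rightarrow> bool" where
  "small_alive i t \<longleftrightarrow> r i \<le> t \<and> 0 < MJ i t \<and> MJ i t \<le> y"

definition serves_small :: "nat \<Rightarrow> real \<Rightarrow> bool" where
  "serves_small m t \<longleftrightarrow> (\<exists>i<n. small_alive i t \<and> (\<exists>l<k i. \<sigma> t m = Some (i, l)))"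

lemma Wjob_mjrem_right:
  assumes "0 \<le> s" "s \<le> v" "\<sigma> constant_on {s..<v}" "i < n"
    and "r i \<le> v \<longrightarrow> r i \<le> s" "y < MJ i s \<longrightarrow> y < MJ i v"
  shows "Wjob MJ i v
    \<le> Wjob MJ i s - (v - s) * (if small_alive i s then \<Sum>l<k i. machines_on N \<sigma> i l s else 0)"
proof (cases "small_alive i s")
  case True
  then have "Wjob MJ i s = MJ i s" by (simp add: small_alive_def Wjob_def small_part_def)
  moreover have "Wjob MJ i v \<le> MJ i v"
    using mjrem_nonneg[OF assms(4), of v] assms(1,2) by (simp add: Wjob_def small_part_def)
  ultimately show ?thesis using True mjrem_constant_step[OF assms(3,1,2)] by simp
next
  case False
  have "MJ i v \<le> MJ i s" using assms(1,2) by (rule mjrem_antimono)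
  then have "Wjob MJ i v = 0"
    using False assms(5,6) by (auto simp: Wjob_def small_part_def small_alive_def)
  then show ?thesis using False Wjob_nonneg[of MJ i s] by simp
qed

lemma kappa_right:
  assumes "0 \<le> s" "s \<le> v" "\<sigma> constant_on {s..v}"
  shows "kappa i v \<le> kappa i s"
proof (cases "kappa i v = 0")
  case False
  have "\<sigma> v = \<sigma> s" using constant_on_eq[OF assms(3)] assms(1,2) by simp
  then have same_running: "running i l v \<longleftrightarrow> running i l s" for l by (simp add: running_def)
  have const: "\<sigma> constant_on {s..<v}" using assms(3) by (rule constant_on_subset) auto
  obtain l0 where "l0 < k i" "running i l0 v" "y < MJ i v"
    and idle_v: "(\<Sum>l\<in>idle_tasks i v. MR i l v) \<le> y"
    using False by (auto simp: kappa_def split: if_splits)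
  have "(\<Sum>l\<in>idle_tasks i s. MR i l s) = (\<Sum>l\<in>idle_tasks i v. MR i l v)"
    using mrem_constant_if_not_running[OF const assms(1,2)]
    by (intro sum.cong) (auto simp: idle_tasks_def same_running)
  moreover have "MJ i v \<le> MJ i s" using assms(1,2) by (rule mjrem_antimono)
  ultimately have "kappa i s = y"
    using \<open>l0 < k i\<close> \<open>running i l0 v\<close> \<open>y < MJ i v\<close> idle_v same_running
    by (auto simp: kappa_def)
  then show ?thesis using kappa_le by simp
qed (simp add: kappa_nonneg)

lemma np_backlog_right:
  assumes "0 \<le> s" "s \<le> v" "\<sigma> constant_on {s..v}" "small_task_waiting s" "m < N"
    and "\<forall>i<n. y < MJ i s \<longrightarrow> y < MJ i v"
  shows "np_backlog m v \<le> np_backlog m s - (v - s) + (v - s) * (if serves_small m s then 1 else 0)"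
proof -
  obtain i l where il: "\<sigma> s m = Some (i, l)" "np i l \<and> 0 < MP i l s \<or> MJ i s \<le> y"
    using waiting_machine_busy[OF assms(4,1,5)] by blast
  have valid: "i < n" "l < k i" "r i \<le> s" "0 < MR i l s"
    using scheduled_task_valid[OF assms(1,5) il(1)] by auto
  have "\<sigma> v = \<sigma> s" using constant_on_eq[OF assms(3)] assms(1,2) by simp
  then have \<sigma>_v: "\<sigma> v m = Some (i, l)" using il(1) by simp
  have "MJ i v \<le> MJ i s" using assms(1,2) by (rule mjrem_antimono)
  show ?thesis
  proof (cases "MJ i s \<le> y")
    case True
    have "0 < MJ i s" using mrem_le_mjrem[OF valid(1,2) assms(1)] valid(4) by simp
    then have "serves_small m s" using True valid il(1) by (auto simp: serves_small_def small_alive_def)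
    then show ?thesis
      using True il(1) \<sigma>_v \<open>MJ i v \<le> MJ i s\<close> by (simp add: np_backlog_def)
  next
    case False
    then have "np i l" "y < MJ i v" using il(2) assms(6) valid(1) by auto
    have "\<not> serves_small m s" using il(1) False by (auto simp: serves_small_def small_alive_def)
    have const: "\<sigma> constant_on {s..<v}" using assms(3) by (rule constant_on_subset) auto
    have "MR i l v = MR i l s - (v - s) * machines_on N \<sigma> i l s"
      by (rule mrem_constant_step[OF const assms(1,2)])
    moreover have "(v - s) * 1 \<le> (v - s) * machines_on N \<sigma> i l s"
      using machines_on_ge_1[of m N \<sigma> s i l, OF assms(5) il(1)] assms(2) by (intro mult_left_mono) auto
    ultimately show ?thesis
      using False il(1) \<sigma>_v \<open>np i l\<close> \<open>y < MJ i v\<close> \<open>\<not> serves_small m s\<close>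
      by (simp add: np_backlog_def)
  qed
qed

lemma sum_indicator_at_most_one:
  assumes "finite S" "\<And>x x'. x \<in> S \<Longrightarrow> x' \<in> S \<Longrightarrow> P x \<Longrightarrow> P x' \<Longrightarrow> x = x'"
  shows "(\<Sum>x\<in>S. if P x then 1 else 0 :: real) = (if \<exists>x\<in>S. P x then 1 else 0)"
proof (cases "\<exists>x\<in>S. P x")
  case True
  then obtain x where "x \<in> S" "P x" by blast
  then have "{x \<in> S. P x} = {x}" using assms(2) by blast
  then show ?thesis using True sum.inter_filter[OF assms(1), of "\<lambda>_. 1::real" P] by simp
qed simp

lemma sum_machines_on_small_alive:
  "(\<Sum>i<n. if small_alive i t then \<Sum>l<k i. machines_on N \<sigma> i l t else 0)
    = (\<Sum>m<N. if serves_small m t then 1 else 0)"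
proof -
  have "(\<Sum>i<n. if small_alive i t then \<Sum>l<k i. machines_on N \<sigma> i l t else 0)
      = (\<Sum>i<n. \<Sum>l<k i. \<Sum>m<N. if small_alive i t \<and> \<sigma> t m = Some (i, l) then 1 else 0)"
    by (intro sum.cong refl) (simp add: machines_on_def)
  also have "\<dots> = (\<Sum>m<N. \<Sum>i<n. \<Sum>l<k i. if small_alive i t \<and> \<sigma> t m = Some (i, l) then 1 else 0)"
    by (simp add: sum.swap[where B = "{..<N}"])
  also have "\<dots> = (\<Sum>m<N. if serves_small m t then 1 else 0)"
  proof (intro sum.cong refl)
    fix m
    have "(\<Sum>l<k i. if small_alive i t \<and> \<sigma> t m = Some (i, l) then 1 else 0 :: real)
        = (if small_alive i t \<and> (\<exists>l<k i. \<sigma> t m = Some (i, l)) then 1 else 0)" for i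
      by (subst sum_indicator_at_most_one) auto
    then have "(\<Sum>i<n. \<Sum>l<k i. if small_alive i t \<and> \<sigma> t m = Some (i, l) then 1 else 0)
        = (\<Sum>i<n. if small_alive i t \<and> (\<exists>l<k i. \<sigma> t m = Some (i, l)) then 1 else 0 :: real)"
      by (intro sum.cong) simp_all
    also have "\<dots> = (if serves_small m t then 1 else 0)"
      unfolding serves_small_def by (subst sum_indicator_at_most_one) auto
    finally show "(\<Sum>i<n. \<Sum>l<k i. if small_alive i t \<and> \<sigma> t m = Some (i, l) then 1 else 0)
        = (if serves_small m t then 1 else 0 :: real)" .
  qed
  finally show ?thesis .
qed

lemma potential_right_step:
  assumes "0 \<le> s" "s \<le> v" "\<sigma> constant_on {s..v}" "\<tau> constant_on {s..v}"
    and "\<forall>i<n. r i \<le> v \<longrightarrow> r i \<le> s" "\<forall>i<n. y < MJ i s \<longrightarrow> y < MJ i v" "small_task_waiting s"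
  shows "potential v \<le> potential s"
proof -
  define small where "small i = (if small_alive i s then \<Sum>l<k i. machines_on N \<sigma> i l s else 0)" for i
  define ind where "ind i = (if \<tau> s = Some i then 1 else 0 :: real)" for i
  have "\<sigma> constant_on {s..<v}" "\<tau> constant_on {s..<v}"
    using assms(3,4) by (auto elim: constant_on_subset)
  then have "job_potential i v \<le> job_potential i s - (v - s) * small i + real N * (v - s) * ind i"
    if "i < n" for i
    using Wjob_mjrem_right[of s v i] kappa_right[OF assms(1-3), of i]
      Wjob_srem_step[of s v i] arrival_nonneg[of i s v] assms(1,2,5,6) that
    by (fastforce simp: job_potential_def small_def ind_def)
  then have "(\<Sum>i<n. job_potential i v)
      \<le> (\<Sum>i<n. job_potential i s - (v - s) * small i + real N * (v - s) * ind i)"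
    by (intro sum_mono) simp
  also have "\<dots> = (\<Sum>i<n. job_potential i s) - (v - s) * (\<Sum>i<n. small i)
      + real N * (v - s) * (\<Sum>i<n. ind i)"
    by (simp add: sum.distrib sum_subtractf sum_distrib_left)
  also have "\<dots> \<le> (\<Sum>i<n. job_potential i s) - (v - s) * (\<Sum>i<n. small i) + real N * (v - s)"
    using sum_if_eq_Some_le_1[of "{..<n}" "\<tau> s"] assms(2) by (simp add: ind_def mult_left_le)
  finally have jobs: "(\<Sum>i<n. job_potential i v)
      \<le> (\<Sum>i<n. job_potential i s) - (v - s) * (\<Sum>i<n. small i) + real N * (v - s)" .
  have "(\<Sum>m<N. np_backlog m v)
      \<le> (\<Sum>m<N. np_backlog m s - (v - s) + (v - s) * (if serves_small m s then 1 else 0))"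
    using np_backlog_right[OF assms(1-3,7) _ assms(6)] by (intro sum_mono) simp
  also have "\<dots> = (\<Sum>m<N. np_backlog m s) - real N * (v - s) + (v - s) * (\<Sum>i<n. small i)"
    by (simp add: sum.distrib sum_subtractf sum_distrib_left small_def sum_machines_on_small_alive)
  finally show ?thesis using jobs by (simp add: potential_def)
qed

lemma waiting_persists_left:
  assumes "0 \<le> s" "s \<le> v" "\<sigma> v = \<sigma> s"
    and "\<forall>i<n. r i \<le> v \<longrightarrow> r i \<le> s" "\<forall>i<n. y < MJ i s \<longrightarrow> y < MJ i v" "small_task_waiting v"
  shows "small_task_waiting s"
proof -
  obtain j l where j: "j < n" "l < k j" "r j \<le> v" "0 < MR j l v" "\<not> running j l v"
    "\<not> np j l \<or> MP j l v = 0" "MJ j v \<le> y"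
    using assms(6) unfolding small_task_waiting_def by blast
  have "MR j l v \<le> MR j l s" "MP j l s \<le> MP j l v"
    using assms(1,2) by (auto intro: mrem_antimono mproc_mono)
  then have "0 < MR j l s" "\<not> np j l \<or> MP j l s = 0"
    using j(4,6) mproc_nonneg[of N \<sigma> j l s] by auto
  moreover have "\<not> running j l s" using j(5) assms(3) by (simp add: running_def)
  moreover have "r j \<le> s" "MJ j s \<le> y" using assms(4,5) j(1,3,7) by force+
  ultimately show ?thesis using j(1,2) unfolding small_task_waiting_def by blast
qed

lemma eventually_quiet_left:
  "\<forall>\<^sub>F u in at_left s. \<sigma> constant_on {u..<s} \<and> \<tau> constant_on {u..<s} \<and>
     (\<forall>i<n. r i \<le> s \<longrightarrow> r i \<le> u \<or> r i = s)"
  using eventually_at_left_avoids_finite[where A="{..<n}" and f=r, OF finite_lessThan]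
    pconst_eventually_constant_left[OF pconst] pconst_eventually_constant_left[OF \<tau>_pconst]
  by eventually_elim force

lemma eventually_big_stays_big:
  assumes "0 \<le> s"
  shows "\<forall>\<^sub>F v in at_right s. \<forall>i\<in>{..<n}. y < MJ i s \<longrightarrow> y < MJ i v"
proof (intro eventually_ball_finite ballI)
  fix i
  have "(MJ i \<longlongrightarrow> MJ i s) (at s within {0..})"
    using continuous_on_mjrem[of k p i] assms unfolding continuous_on_def by simp
  then have "(MJ i \<longlongrightarrow> MJ i s) (at_right s)"
    by (rule tendsto_within_subset) (use assms in auto)
  then show "\<forall>\<^sub>F v in at_right s. y < MJ i s \<longrightarrow> y < MJ i v"
    by (cases "y < MJ i s") (auto dest: order_tendstoD(1))
qed simp

lemma eventually_quiet_right:
  assumes "0 \<le> s"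
  shows "\<forall>\<^sub>F v in at_right s. \<sigma> constant_on {s..v} \<and> \<tau> constant_on {s..v} \<and>
     (\<forall>i<n. r i \<le> v \<longrightarrow> r i \<le> s) \<and> (\<forall>i<n. y < MJ i s \<longrightarrow> y < MJ i v)"
  using eventually_at_right_avoids_finite[where A="{..<n}" and f=r, OF finite_lessThan] eventually_big_stays_big[OF assms]
    pconst_eventually_constant_right[OF pconst] pconst_eventually_constant_right[OF \<tau>_pconst]
  by eventually_elim (force simp: not_less)

lemma potential_le_of_left:
  assumes "0 < s" "small_task_waiting s" "\<And>u. 0 \<le> u \<Longrightarrow> u < s \<Longrightarrow> potential u \<le> B"
  shows "potential s \<le> B"
proof -
  have "\<forall>\<^sub>F u in at_left s. potential s \<le> B + real N * (s - u)"
    using eventually_quiet_left eventually_at_left_real[OF assms(1)]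
  proof eventually_elim
    case (elim u)
    then show ?case using potential_left_step[of u s] assms(2) assms(3)[of u] by fastforce
  qed
  moreover have "((\<lambda>u. B + real N * (s - u)) \<longlongrightarrow> B) (at_left s)"
    by (auto intro!: tendsto_eq_intros)
  ultimately show ?thesis by (intro tendsto_lowerbound) auto
qed

lemma eventually_potential_le_right:
  assumes "0 \<le> s"
  shows "\<forall>\<^sub>F v in at_right s. small_task_waiting v \<longrightarrow> potential v \<le> potential s"
  using eventually_quiet_right[OF assms] eventually_at_right_less[of s]
proof eventually_elim
  case (elim v)
  show ?case
  proof
    assume "small_task_waiting v"
    moreover have "\<sigma> v = \<sigma> s" using elim constant_on_eq[of \<sigma> "{s..v}" s v] by simp
    ultimately have "small_task_waiting s"
      using waiting_persists_left[OF assms less_imp_le[OF elim(2)]] elim(1) by simp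
    then show "potential v \<le> potential s" using potential_right_step[OF assms] elim by simp
  qed
qed

lemma potential_le:
  assumes "0 \<le> t"
  shows "potential t \<le> real N * y + real N * eta n k p np"
  using assms
proof (induction t rule: continuous_induct)
  case (left s)
  consider "\<not> small_task_waiting s" | "small_task_waiting s" "s = 0" | "small_task_waiting s" "0 < s"
    using left.hyps by fastforce
  then show ?case
  proof cases
    case 1
    then show ?thesis using potential_not_waiting left.hyps by blast
  next
    case 2
    moreover have "0 \<le> real N * y + real N * eta n k p np"
      using y_nonneg eta_nonneg[of n k p np] by simp
    ultimately show ?thesis using potential_at_0 by fastforce
  next
    case 3
    then show ?thesis using potential_le_of_left left.IH by blast
  qed
next
  case (right s)
  show ?case
    using eventually_potential_le_right[OF right.hyps] eventually_at_right_less[of s]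
  proof eventually_elim
    case (elim v)
    then show ?case
      using right.IH[of s] right.hyps potential_not_waiting[of v] by (cases "small_task_waiting v") auto
  qed
qed

lemma Wle_diff_le_potential:
  assumes "0 \<le> t"
  shows "Wle n r MJ y t - Wle n r SR y t \<le> potential t"
proof -
  have "Wle n r MJ y t - Wle n r SR y t \<le> (\<Sum>i<n. job_potential i t)"
    unfolding Wle_eq_sum_Wjob job_potential_def sum_subtractf[symmetric]
    by (intro sum_mono) (simp add: kappa_nonneg)
  moreover have "0 \<le> (\<Sum>m<N. np_backlog m t)"
    using np_backlog_nonneg[OF assms] by (intro sum_nonneg) simp
  ultimately show ?thesis by (simp add: potential_def)
qed

end

theorem lemma2:
  fixes N n :: nat and r :: "nat \<Rightarrow> real" and k :: "nat \<Rightarrow> nat"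
    and p :: "nat \<Rightarrow> nat \<Rightarrow> real" and np :: "nat \<Rightarrow> nat \<Rightarrow> bool"
    and \<sigma> :: "real \<Rightarrow> nat \<Rightarrow> (nat \<times> nat) option" and \<tau> :: "real \<Rightarrow> nat option"
    and y t :: real
  assumes "N \<ge> 1"
    and "\<forall>i<n. r i \<ge> 0 \<and> k i \<ge> 1"
    and "\<forall>i<n. \<forall>l<k i. p i l > 0"
    and "msrpt_schedule N n r k p np \<sigma>"
    and "srpt1N_schedule N n r k p \<tau>"
    and "y \<ge> 0" and "t \<ge> 0"
  shows "Wle n r (mjrem N k p \<sigma>) y t - Wle n r (srem N k p \<tau>) y t
           \<le> real N * (2 * y + eta n k p np)"
proof -
  interpret msrpt_comparison N n r k p np \<sigma> \<tau> y
    using assms(3-6) by unfold_locales (auto simp: srpt1N_schedule_def less_imp_le)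
  have "Wle n r MJ y t - Wle n r SR y t \<le> potential t"
    using \<open>t \<ge> 0\<close> by (rule Wle_diff_le_potential)
  also have "\<dots> \<le> real N * y + real N * eta n k p np"
    using \<open>t \<ge> 0\<close> by (rule potential_le)
  also have "\<dots> \<le> real N * (2 * y + eta n k p np)"
    using \<open>y \<ge> 0\<close> by (simp add: algebra_simps)
  finally show ?thesis .
qed

end
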